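(* $\mathcal{S}_P\subseteq\mathcal{S}_F\subseteq\mathcal{S}_C\subseteq\mathcal{D}^-$.
   Context: For a distribution function $G$, $G^{-1}(u)=\inf\{x\in\mathbb{R}:G(x)\ge u\}$ for $0<u<1$. For distribution functions $F,G$, write $F\le_{skew}G$ if the function $x\mapsto G^{-1}(F(x))$ is convex (on the set of $x$ with $0<F(x)<1$). For a distribution function $F$, $\mathcal{S}(F)=\{G: F\le_{skew}G\}$. Set $\mathcal{S}_P=\mathcal{S}(F_P)$ with $F_P(x)=1-1/x$, $x\ge1$ (Pareto(1)); $\mathcal{S}_F=\mathcal{S}(F_F)$ with $F_F(x)=e^{-1/x}$, $x>0$ (standard Fréchet); $\mathcal{S}_C=\mathcal{S}(F_C)$ with $F_C(x)=\frac1\pi\arctan(x)+\frac12$, $x\in\mathbb{R}$ (Cauchy). For real random variables, $X \le_{st} Y$ means $P(X\le t)\ge P(Y\le t)$ for all $t\in\mathbb{R}$. A distribution function $F_X$ belongs to $\mathcal{D}^-$ if for every $n\in\mathbb{N}$, all $\theta_1,\dots,\theta_n\ge 0$ with $\sum_{i=1}^n\theta_i=1$, and i.i.d. random variables $X_1,\dots,X_n$ with distribution $F_X$, we have $X_1\le_{st}\sum_{i=1}^n\theta_iX_i$. *)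

theory Defs
  imports "HOL-Probability.Probability"
begin

definition is_dist_fun :: "(real \<Rightarrow> real) \<Rightarrow> bool" where
  "is_dist_fun G \<longleftrightarrow> mono G \<and> (\<forall>x. continuous (at_right x) G)
     \<and> (G \<longlongrightarrow> 0) at_bot \<and> (G \<longlongrightarrow> 1) at_top"

definition quantile :: "(real \<Rightarrow> real) \<Rightarrow> real \<Rightarrow> real" where
  "quantile G u = Inf {x. G x \<ge> u}"

definition skew_le :: "(real \<Rightarrow> real) \<Rightarrow> (real \<Rightarrow> real) \<Rightarrow> bool" where
  "skew_le F G \<longleftrightarrow> convex_on {x. 0 < F x \<and> F x < 1} (\<lambda>x. quantile G (F x))"

definition skew_class :: "(real \<Rightarrow> real) \<Rightarrow> (real \<Rightarrow> real) set" where
  "skew_class F = {G. is_dist_fun G \<and> skew_le F G}"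

definition F_P :: "real \<Rightarrow> real" where
  "F_P x = (if x \<ge> 1 then 1 - 1 / x else 0)"

definition F_F :: "real \<Rightarrow> real" where
  "F_F x = (if x > 0 then exp (- 1 / x) else 0)"

definition F_C :: "real \<Rightarrow> real" where
  "F_C x = arctan x / pi + 1 / 2"

abbreviation "S_P \<equiv> skew_class F_P"
abbreviation "S_F \<equiv> skew_class F_F"
abbreviation "S_C \<equiv> skew_class F_C"

definition st_le :: "'a measure \<Rightarrow> ('a \<Rightarrow> real) \<Rightarrow> ('a \<Rightarrow> real) \<Rightarrow> bool" where
  "st_le M X Y \<longleftrightarrow> (\<forall>t. measure M {\<omega> \<in> space M. X \<omega> \<le> t} \<ge> measure M {\<omega> \<in> space M. Y \<omega> \<le> t})"

text \<open>Membership in D^-, with the underlying probability spaces ranging over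
  measures on the sample-space type 'a (the theorem quantifies over all types 'a).\<close>
definition Dminus :: "'a itself \<Rightarrow> (real \<Rightarrow> real) \<Rightarrow> bool" where
  "Dminus _ F \<longleftrightarrow>
     (\<forall>(M :: 'a measure) (X :: nat \<Rightarrow> 'a \<Rightarrow> real) (n :: nat) (\<theta> :: nat \<Rightarrow> real).
        prob_space M \<longrightarrow> n \<ge> 1
        \<longrightarrow> (\<forall>i\<in>{1..n}. \<theta> i \<ge> 0) \<longrightarrow> (\<Sum>i=1..n. \<theta> i) = 1
        \<longrightarrow> (\<forall>i\<in>{1..n}. X i \<in> borel_measurable M)
        \<longrightarrow> prob_space.indep_vars M (\<lambda>_. borel) X {1..n}
        \<longrightarrow> (\<forall>i\<in>{1..n}. \<forall>t. measure M {\<omega> \<in> space M. X i \<omega> \<le> t} = F t)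
        \<longrightarrow> st_le M (X 1) (\<lambda>\<omega>. \<Sum>i=1..n. \<theta> i * X i \<omega>))"

end

theory Submission
  imports Defs "HOL-Real_Asymp.Real_Asymp"
begin

text \<open>If \<open>F = H \<circ> h\<close> with \<open>h\<close> convex, then \<open>G\<^sup>-\<^sup>1 \<circ> F = (G\<^sup>-\<^sup>1 \<circ> H) \<circ> h\<close> is convex as soon as the
  nondecreasing function \<open>G\<^sup>-\<^sup>1 \<circ> H\<close> is, so \<open>\<S>(H) \<subseteq> \<S>(F)\<close>. The Frechet distribution function is
  the Pareto one composed with \<open>x \<mapsto> 1 / (1 - e\<^sup>-\<^sup>1\<^sup>/\<^sup>x)\<close>, and the Cauchy one is the Frechet one
  composed with \<open>x \<mapsto> -1 / ln F\<^sub>C(x)\<close>; both maps are convex, the second by an elementary but delicate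
  trigonometric inequality.

  For \<open>\<S>\<^sub>C \<subseteq> \<D>\<^sup>-\<close>, realise i.i.d. \<open>X\<^sub>i \<sim> G\<close> as \<open>\<phi>(C\<^sub>i)\<close> with \<open>C\<^sub>i\<close> i.i.d. standard Cauchy and
  \<open>\<phi> = G\<^sup>-\<^sup>1 \<circ> F\<^sub>C\<close> convex. Jensen gives \<open>\<Sum>\<^sub>i \<theta>\<^sub>i \<phi>(C\<^sub>i) \<ge> \<phi>(\<Sum>\<^sub>i \<theta>\<^sub>i C\<^sub>i)\<close>, and by the stability of the
  Cauchy law \<open>\<Sum>\<^sub>i \<theta>\<^sub>i C\<^sub>i\<close> is again standard Cauchy, so the right-hand side has law \<open>G\<close>.\<close>

section \<open>Elementary inequalities\<close>

lemma nonneg_if_deriv_nonneg_from_zero: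
  fixes f f' :: "real \<Rightarrow> real"
  assumes "0 \<le> y" "f 0 = 0"
    and "\<And>x. 0 \<le> x \<Longrightarrow> x \<le> y \<Longrightarrow> (f has_real_derivative f' x) (at x)"
    and "\<And>x. 0 \<le> x \<Longrightarrow> x \<le> y \<Longrightarrow> 0 \<le> f' x"
  shows "0 \<le> f y"
  using DERIV_nonneg_imp_nondecreasing[of 0 y f] assms by force

lemma two_mult_exp_minus_one_le:
  fixes y :: real
  assumes "0 \<le> y"
  shows "2 * (exp y - 1) \<le> y * (exp y + 1)"
proof -
  have "0 \<le> y * (exp y + 1) - 2 * (exp y - 1)"
  proof (rule nonneg_if_deriv_nonneg_from_zero[where f = "\<lambda>y. y * (exp y + 1) - 2 * (exp y - 1)"
        and f' = "\<lambda>y. 1 - exp y + y * exp y"])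
    fix x :: real
    assume "0 \<le> x" "x \<le> y"
    show "((\<lambda>y. y * (exp y + 1) - 2 * (exp y - 1)) has_real_derivative 1 - exp x + x * exp x) (at x)"
      by (rule derivative_eq_intros refl | (simp; fail))+
    have "(1 - x) * exp x \<le> exp (- x) * exp x"
      using exp_ge_add_one_self[of "- x"] by (intro mult_right_mono) auto
    then show "0 \<le> 1 - exp x + x * exp x"
      by (simp add: exp_minus algebra_simps)
  qed (use assms in auto)
  then show ?thesis by simp
qed

lemma cos_ge_taylor2:
  fixes y :: real
  assumes "0 \<le> y"
  shows "1 - y^2 / 2 \<le> cos y"
proof -
  have "0 \<le> cos y - 1 + y^2 / 2"
  proof (rule nonneg_if_deriv_nonneg_from_zero[where f = "\<lambda>y. cos y - 1 + y^2 / 2"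
        and f' = "\<lambda>y. y - sin y"])
    fix x :: real
    assume x: "0 \<le> x" "x \<le> y"
    show "((\<lambda>y. cos y - 1 + y^2 / 2) has_real_derivative x - sin x) (at x)"
      by (rule derivative_eq_intros refl | (simp; fail))+
    show "0 \<le> x - sin x"
      using sin_x_le_x[OF x(1)] by simp
  qed (use assms in auto)
  then show ?thesis by simp
qed

lemma sin_ge_taylor3:
  fixes y :: real
  assumes "0 \<le> y"
  shows "y - y^3 / 6 \<le> sin y"
proof -
  have "0 \<le> sin y - y + y^3 / 6"
  proof (rule nonneg_if_deriv_nonneg_from_zero[where f = "\<lambda>y. sin y - y + y^3 / 6"
        and f' = "\<lambda>y. cos y - 1 + y^2 / 2"])
    fix x :: real
    assume x: "0 \<le> x" "x \<le> y"
    show "((\<lambda>y. sin y - y + y^3 / 6) has_real_derivative cos x - 1 + x^2 / 2) (at x)"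
      by (rule derivative_eq_intros refl | (simp; fail))+
    show "0 \<le> cos x - 1 + x^2 / 2"
      using cos_ge_taylor2[OF x(1)] by simp
  qed (use assms in auto)
  then show ?thesis by simp
qed

lemma cos_le_taylor4:
  fixes y :: real
  assumes "0 \<le> y"
  shows "cos y \<le> 1 - y^2 / 2 + y^4 / 24"
proof -
  have "0 \<le> 1 - y^2 / 2 + y^4 / 24 - cos y"
  proof (rule nonneg_if_deriv_nonneg_from_zero[where f = "\<lambda>y. 1 - y^2 / 2 + y^4 / 24 - cos y"
        and f' = "\<lambda>y. sin y - y + y^3 / 6"])
    fix x :: real
    assume x: "0 \<le> x" "x \<le> y"
    show "((\<lambda>y. 1 - y^2 / 2 + y^4 / 24 - cos y) has_real_derivative sin x - x + x^3 / 6) (at x)"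
      by (rule derivative_eq_intros refl | (simp; fail))+
    show "0 \<le> sin x - x + x^3 / 6"
      using sin_ge_taylor3[OF x(1)] by simp
  qed (use assms in auto)
  then show ?thesis by simp
qed

lemma sin_le_two_mult_cos:
  fixes s :: real
  assumes "0 \<le> s" "s \<le> 1"
  shows "sin s \<le> 2 * s * cos s"
proof -
  have "2 * s * (1 - s^2 / 2) \<le> 2 * s * cos s"
    using cos_ge_taylor2[OF assms(1)] assms(1) by (intro mult_left_mono) auto
  moreover have "sin s - 2 * s * (1 - s^2 / 2) = s * (s^2 - 1) - (s - sin s)"
    by (simp add: algebra_simps power2_eq_square)
  moreover have "s * (s^2 - 1) \<le> 0"
    using assms by (intro mult_nonneg_nonpos) (auto simp: power_le_one)
  ultimately show ?thesis
    using sin_x_le_x[OF assms(1)] by linarith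
qed

lemma three_mult_cos_le:
  fixes y :: real
  assumes "0 \<le> y" "y^2 \<le> 3"
  shows "3 * y * cos y \<le> (3 - y^2) * sin y"
proof -
  have "3 * y * cos y \<le> 3 * y * (1 - y^2 / 2 + y^4 / 24)"
    using cos_le_taylor4[OF assms(1)] assms(1) by (intro mult_left_mono) auto
  also have "\<dots> = (3 - y^2) * (y - y^3 / 6) - y^5 / 24"
    by (simp add: algebra_simps eval_nat_numeral divide_simps)
  also have "\<dots> \<le> (3 - y^2) * (y - y^3 / 6)"
    using assms(1) by simp
  also have "\<dots> \<le> (3 - y^2) * sin y"
    using sin_ge_taylor3[OF assms(1)] assms(2) by (intro mult_left_mono) auto
  finally show ?thesis .
qed

lemma minus_ln_one_minus_le:
  fixes w :: real
  assumes "0 \<le> w" "w < 1"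
  shows "- ln (1 - w) \<le> w + w^2 / 2 + w^3 / (3 * (1 - w))"
proof -
  have "0 \<le> w + w^2 / 2 + w^3 / (3 * (1 - w)) + ln (1 - w)"
  proof (rule nonneg_if_deriv_nonneg_from_zero[where f = "\<lambda>w. w + w^2 / 2 + w^3 / (3 * (1 - w)) + ln (1 - w)"
        and f' = "\<lambda>w. w^3 / (3 * (1 - w)^2)"])
    fix x :: real
    assume x: "0 \<le> x" "x \<le> w"
    have "x < 1" using x assms by simp
    then show "((\<lambda>w. w + w^2 / 2 + w^3 / (3 * (1 - w)) + ln (1 - w))
        has_real_derivative x^3 / (3 * (1 - x)^2)) (at x)"
      by - ((rule derivative_eq_intros refl | (simp; fail))+,
          simp add: divide_simps, simp add: algebra_simps power2_eq_square power3_eq_cube)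
    show "0 \<le> x^3 / (3 * (1 - x)^2)" using x by simp
  qed (use assms in auto)
  then show ?thesis by simp
qed

section \<open>Quantile functions and convex reparametrisations\<close>

lemma is_dist_fun_nonneg:
  assumes "is_dist_fun G"
  shows "0 \<le> G x"
  using assms unfolding is_dist_fun_def
  by (intro tendsto_upperbound[where F = at_bot and f = G])
     (auto simp: eventually_at_bot_linorder intro!: exI[of _ x] monoD[of G])

lemma is_dist_fun_le_one:
  assumes "is_dist_fun G"
  shows "G x \<le> 1"
  using assms unfolding is_dist_fun_def
  by (intro tendsto_lowerbound[where F = at_top and f = G])
     (auto simp: eventually_at_top_linorder intro!: exI[of _ x] monoD[of G])

lemma is_dist_fun_superlevel_set:
  assumes G: "is_dist_fun G" and u: "0 < u" "u < 1"
  shows "{x. u \<le> G x} \<noteq> {}" "bdd_below {x. u \<le> G x}"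
proof -
  have "eventually (\<lambda>x. u < G x) at_top"
    using G u by (intro order_tendstoD(1)[of G 1]) (auto simp: is_dist_fun_def)
  then obtain a where "u < G a"
    by (auto simp: eventually_at_top_linorder)
  then show "{x. u \<le> G x} \<noteq> {}" using less_imp_le by blast
  have "eventually (\<lambda>x. G x < u) at_bot"
    using G u by (intro order_tendstoD(2)[of G 0]) (auto simp: is_dist_fun_def)
  then obtain c where c: "\<And>x. x \<le> c \<Longrightarrow> G x < u"
    by (auto simp: eventually_at_bot_linorder)
  show "bdd_below {x. u \<le> G x}"
  proof (rule bdd_belowI)
    fix x assume "x \<in> {x. u \<le> G x}"
    then show "c \<le> x" using c[of x] by force
  qed
qed

text \<open>Right continuity of \<open>G\<close> is what makes the infimum attained.\<close>
lemma quantile_le_iff: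
  assumes G: "is_dist_fun G" and u: "0 < u" "u < 1"
  shows "quantile G u \<le> t \<longleftrightarrow> u \<le> G t"
proof
  assume "u \<le> G t"
  then show "quantile G u \<le> t"
    unfolding quantile_def by (intro cInf_lower is_dist_fun_superlevel_set[OF G u]) auto
next
  assume qt: "quantile G u \<le> t"
  define q where "q = quantile G u"
  have mono: "mono G" and right_cont: "continuous (at_right q) G"
    using G by (auto simp: is_dist_fun_def)
  have "eventually (\<lambda>x. u \<le> G x) (at_right q)"
  proof (rule eventually_at_rightI[of q "q + 1"])
    fix x assume "x \<in> {q<..<q + 1}"
    then have "Inf {x. u \<le> G x} < x" by (simp add: q_def quantile_def)
    then obtain s where "u \<le> G s" "s < x"
      using cInf_less_iff[OF is_dist_fun_superlevel_set[OF G u]] by blast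
    then show "u \<le> G x" using monoD[OF mono, of s x] by auto
  qed simp
  then have "u \<le> G q"
    using right_cont by (intro tendsto_lowerbound[of G "G q"]) (auto simp: continuous_within)
  also have "G q \<le> G t" using qt monoD[OF mono] by (simp add: q_def)
  finally show "u \<le> G t" .
qed

lemma quantile_mono:
  assumes G: "is_dist_fun G" and "0 < u" "u \<le> v" "v < 1"
  shows "quantile G u \<le> quantile G v"
  using quantile_le_iff[OF G, of v "quantile G v"] quantile_le_iff[OF G, of u "quantile G v"] assms
  by simp

lemma mono_on_quantile_comp:
  assumes G: "is_dist_fun G" and H: "mono_on S H" and range: "\<And>x. x \<in> S \<Longrightarrow> 0 < H x \<and> H x < 1"
  shows "mono_on S (\<lambda>x. quantile G (H x))"
proof (rule mono_onI)
  fix x y assume xy: "x \<in> S" "y \<in> S" "x \<le> y"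
  show "quantile G (H x) \<le> quantile G (H y)"
    using range[OF xy(1)] range[OF xy(2)] monotone_onD[OF H xy]
    by (intro quantile_mono[OF G]) simp_all
qed

lemma convex_on_cong:
  assumes "\<And>x. x \<in> A \<Longrightarrow> f x = g x"
  shows "convex_on A f \<longleftrightarrow> convex_on A g"
  using assms by (auto simp: convex_on_def convex_def)

lemma convex_on_compose_mono:
  fixes g h :: "real \<Rightarrow> real"
  assumes g: "convex_on B g" "mono_on B g" and h: "convex_on A h" "h ` A \<subseteq> B"
  shows "convex_on A (\<lambda>x. g (h x))"
proof (rule convex_onI)
  show "convex A" using h(1) by (rule convex_on_imp_convex)
  fix t x y :: real
  assume t: "0 < t" "t < 1" and xy: "x \<in> A" "y \<in> A"
  have "(1 - t) *\<^sub>R x + t *\<^sub>R y \<in> A"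
    using convexD[OF \<open>convex A\<close> xy, of "1 - t" t] t by simp
  moreover have "(1 - t) * h x + t * h y \<in> B"
    using convexD[OF convex_on_imp_convex[OF g(1)], of "h x" "h y" "1 - t" t] h(2) xy t by auto
  moreover have "h ((1 - t) *\<^sub>R x + t *\<^sub>R y) \<le> (1 - t) * h x + t * h y"
    using convex_onD[OF h(1), of t x y] t xy by simp
  ultimately have "g (h ((1 - t) *\<^sub>R x + t *\<^sub>R y)) \<le> g ((1 - t) * h x + t * h y)"
    using monotone_onD[OF g(2)] h(2) by blast
  also have "\<dots> \<le> (1 - t) * g (h x) + t * g (h y)"
    using convex_onD[OF g(1), of t "h x" "h y"] h(2) xy t by auto
  finally show "g (h ((1 - t) *\<^sub>R x + t *\<^sub>R y)) \<le> (1 - t) * g (h x) + t * g (h y)" .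
qed

lemma skew_class_subset_of_convex_reparametrization:
  fixes F H h :: "real \<Rightarrow> real"
  defines "A \<equiv> {x. 0 < F x \<and> F x < 1}" and "B \<equiv> {x. 0 < H x \<and> H x < 1}"
  assumes h: "convex_on A h" and F_eq: "\<And>x. x \<in> A \<Longrightarrow> H (h x) = F x"
    and H: "mono_on B H"
  shows "skew_class H \<subseteq> skew_class F"
proof
  fix G assume "G \<in> skew_class H"
  then have G: "is_dist_fun G" and cvx: "convex_on B (\<lambda>x. quantile G (H x))"
    by (auto simp: skew_class_def skew_le_def B_def)
  have "convex_on A (\<lambda>x. quantile G (H (h x)))"
  proof (rule convex_on_compose_mono[OF cvx _ h])
    show "mono_on B (\<lambda>x. quantile G (H x))"
      by (rule mono_on_quantile_comp[OF G H]) (simp add: B_def)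
    show "h ` A \<subseteq> B" using F_eq by (auto simp: A_def B_def)
  qed
  then have "convex_on A (\<lambda>x. quantile G (F x))"
    using convex_on_cong[of A "\<lambda>x. quantile G (H (h x))"] F_eq by simp
  then show "G \<in> skew_class F"
    using G by (simp add: skew_class_def skew_le_def A_def)
qed

section \<open>Pareto, Frechet and Cauchy\<close>

definition frechet_to_pareto :: "real \<Rightarrow> real" where
  "frechet_to_pareto x = 1 / (1 - exp (- 1 / x))"

lemma F_P_support: "{x. 0 < F_P x \<and> F_P x < 1} = {1<..}"
  by (auto simp: F_P_def split: if_splits)

lemma F_F_support: "{x. 0 < F_F x \<and> F_F x < 1} = {0<..}"
  by (auto simp: F_F_def split: if_splits)

lemma F_P_frechet_to_pareto: "0 < x \<Longrightarrow> F_P (frechet_to_pareto x) = F_F x"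
  by (simp add: F_P_def F_F_def frechet_to_pareto_def divide_simps)

lemma convex_on_frechet_to_pareto: "convex_on {0<..} frechet_to_pareto"
proof -
  define e where "e x = exp (- 1 / x)" for x :: real
  define h' where "h' x = e x / (x^2 * (1 - e x)^2)" for x :: real
  define h'' where "h'' x = e x * (1 + e x - 2 * x * (1 - e x)) / (x^4 * (1 - e x)^3)" for x :: real
  show ?thesis unfolding frechet_to_pareto_def
  proof (rule f''_ge0_imp_convex[where f' = h' and f'' = h''])
    fix x :: real assume "x \<in> {0<..}"
    then have x: "0 < x" "e x < 1" by (auto simp: e_def)
    then show "((\<lambda>x. 1 / (1 - exp (- 1 / x))) has_real_derivative h' x) (at x)"
      unfolding h'_def e_def
      by - ((rule derivative_eq_intros refl | (simp; fail))+,
          simp add: divide_simps, simp add: algebra_simps power2_eq_square)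
    show "(h' has_real_derivative h'' x) (at x)"
      using x unfolding h'_def h''_def e_def
      by - ((rule derivative_eq_intros refl | (simp; fail))+,
          simp add: divide_simps, simp add: algebra_simps eval_nat_numeral)
    have "2 * x * (exp (1 / x) - 1) \<le> exp (1 / x) + 1"
      using two_mult_exp_minus_one_le[of "1 / x"] x by (simp add: field_simps)
    then have "2 * x * (exp (1 / x) - 1) * e x \<le> (exp (1 / x) + 1) * e x"
      by (rule mult_right_mono) (simp add: e_def)
    moreover have "exp (1 / x) * e x = 1"
      by (simp add: e_def exp_minus[symmetric] exp_add[symmetric])
    ultimately have "2 * x * (1 - e x) \<le> 1 + e x"
      by (simp add: mult.assoc left_diff_distrib distrib_right)
    then show "0 \<le> h'' x"
      unfolding h''_def using x by (intro divide_nonneg_pos mult_nonneg_nonneg) (auto simp: e_def)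
  qed simp
qed

lemma S_P_subset_S_F: "S_P \<subseteq> S_F"
proof (rule skew_class_subset_of_convex_reparametrization)
  show "convex_on {x. 0 < F_F x \<and> F_F x < 1} frechet_to_pareto"
    unfolding F_F_support by (rule convex_on_frechet_to_pareto)
  show "F_P (frechet_to_pareto x) = F_F x" if "x \<in> {x. 0 < F_F x \<and> F_F x < 1}" for x
    using that unfolding F_F_support by (simp add: F_P_frechet_to_pareto)
  show "mono_on {x. 0 < F_P x \<and> F_P x < 1} F_P"
    unfolding F_P_support by (rule mono_onI) (auto simp: F_P_def frac_le)
qed

lemma F_C_pos: "0 < F_C x" and F_C_less_one: "F_C x < 1"
  using arctan_bounded[of x] by (auto simp: F_C_def field_simps)

lemma F_C_support: "{x. 0 < F_C x \<and> F_C x < 1} = UNIV"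
  using F_C_pos F_C_less_one by auto

lemma ln_F_C_neg: "ln (F_C x) < 0"
  using F_C_pos[of x] F_C_less_one[of x] by simp

lemma F_C_has_real_derivative [derivative_intros]:
  assumes "(g has_real_derivative g') (at x)"
  shows "((\<lambda>x. F_C (g x)) has_real_derivative g' / (pi * (1 + (g x)^2))) (at x)"
  unfolding F_C_def
  by (rule derivative_eq_intros assms refl | simp)+ (simp add: field_simps)

lemma x_mult_cos_arctan: "x * cos (arctan x) = sin (arctan x)"
  by (simp add: sin_arctan cos_arctan)

text \<open>With \<open>s = \<pi> F\<^sub>C(x) = arctan x + \<pi>/2\<close> one has \<open>x = - cot s\<close>.\<close>
lemma cauchy_key_inequality_nonpos:
  assumes "x \<le> 0"
  shows "- ln (F_C x) * (1 + 2 * pi * x * F_C x) \<le> 2"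
proof -
  define s where "s = arctan x + pi / 2"
  have s_eq: "pi * F_C x = s" by (simp add: s_def F_C_def field_simps)
  have s: "0 < s" "s \<le> pi / 2" using arctan_bounded[of x] assms by (auto simp: s_def)
  have sin_s: "sin s = cos (arctan x)" and cos_s: "cos s = - sin (arctan x)"
    by (simp_all add: s_def sin_add cos_add)
  have "(1 + 2 * x * s) * sin s = cos (arctan x) + 2 * s * (x * cos (arctan x))"
    by (simp add: sin_s algebra_simps)
  also have "\<dots> = sin s - 2 * s * cos s"
    by (simp add: sin_s cos_s x_mult_cos_arctan)
  finally have factor: "(1 + 2 * x * s) * sin s = sin s - 2 * s * cos s" .
  have b: "1 + 2 * pi * x * F_C x = 1 + 2 * x * s"
    using s_eq by (simp add: mult.commute mult.left_commute)
  have L: "0 \<le> - ln (F_C x)" using ln_F_C_neg[of x] by simp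
  show ?thesis
  proof (cases "1 + 2 * x * s \<le> 0")
    case True
    then show ?thesis unfolding b using mult_nonneg_nonpos[OF L True] by linarith
  next
    case False
    have "- ln (F_C x) \<le> 2"
    proof (rule ccontr)
      assume "\<not> - ln (F_C x) \<le> 2"
      then have "ln (F_C x) < ln (exp (- 2))" by simp
      then have "F_C x < exp (- 2)"
        using F_C_pos[of x] by (simp only: ln_less_cancel_iff exp_gt_zero)
      then have "F_C x * exp 2 < 1" by (simp add: exp_minus field_simps)
      moreover have "4 \<le> exp (2::real)"
        using exp_ge_add_one_self[of 1] mult_mono[of 2 "exp 1" 2 "exp (1::real)"]
        by (simp add: exp_add[symmetric])
      then have "F_C x * 4 \<le> F_C x * exp 2"
        using F_C_pos[of x] by (intro mult_left_mono) auto
      ultimately have "F_C x < 1 / 4" by linarith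
      then have "pi * F_C x < pi * (1 / 4)" by (intro mult_strict_left_mono) auto
      then have "s \<le> 1" using pi_less_4 s_eq by simp
      then have "(1 + 2 * x * s) * sin s \<le> 0"
        unfolding factor using sin_le_two_mult_cos[of s] s by simp
      moreover have "0 < sin s" using s by (intro sin_gt_zero) auto
      ultimately show False using False by (simp add: mult_le_0_iff)
    qed
    moreover have "1 + 2 * x * s \<le> 1"
      using assms s by (simp add: mult_nonpos_nonneg)
    ultimately show ?thesis
      unfolding b using mult_left_mono[of "1 + 2 * x * s" 1 "- ln (F_C x)"] L by linarith
  qed
qed

lemma ln_bound_mult_factor_bound_le_two:
  fixes w :: real
  assumes "0 < w" "w \<le> 1 / 2"
  shows "(w + w^2 / 2 + w^3 / (3 * (1 - w))) * (1 + 2 * (1 - w) * (1 / w - 3 * w)) \<le> 2"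
proof -
  have "(w + w^2 / 2 + w^3 / (3 * (1 - w))) * (1 + 2 * (1 - w) * (1 / w - 3 * w))
      = 2 - w^2 * (35/6 - 55/6 * w + 2 * w^2 + w^3) / (1 - w)"
    using assms by (simp add: divide_simps) (simp add: algebra_simps eval_nat_numeral)
  moreover have "0 \<le> 35/6 - 55/6 * w + 2 * w^2 + w^3"
    using assms by (simp add: add_nonneg_nonneg)
  ultimately show ?thesis using assms by simp
qed

text \<open>With \<open>y = \<pi> (1 - F\<^sub>C(x)) = \<pi>/2 - arctan x\<close> one has \<open>x = cot y \<le> 1/y - y/3\<close>.\<close>
lemma cauchy_factor_le:
  assumes "0 < x"
  defines "w \<equiv> 1 - F_C x"
  shows "1 + 2 * pi * x * F_C x \<le> 1 + 2 * (1 - w) * (1 / w - 3 * w)"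
proof -
  define y where "y = pi / 2 - arctan x"
  have y_eq: "pi * w = y" by (simp add: w_def y_def F_C_def field_simps)
  have y: "0 < y" "y < pi / 2" using arctan_bounded[of x] assms by (auto simp: y_def)
  have w: "0 < w" "w < 1 / 2"
    using y y_eq by (auto simp: field_simps zero_less_mult_iff)
  have "y^2 \<le> 3"
  proof -
    have "y \<le> 8 / 5" using y pi_approx by simp
    then have "y^2 \<le> (8 / 5)^2" using y by (intro power_mono) auto
    then show ?thesis by (simp add: power2_eq_square)
  qed
  then have "3 * y * cos y \<le> (3 - y^2) * sin y"
    using three_mult_cos_le y by simp
  moreover have "cos y = x * sin y"
    using x_mult_cos_arctan[of x] by (simp add: y_def sin_diff cos_diff)
  moreover have "0 < sin y" using y by (intro sin_gt_zero) auto
  ultimately have "x * (3 * y) \<le> 3 - y^2"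
    by (simp add: mult.commute mult.left_commute)
  then have "x \<le> 1 / y - y / 3"
    using y by (simp add: field_simps power2_eq_square)
  then have "x * (pi - y) \<le> (1 / y - y / 3) * (pi - y)"
    using y by (intro mult_right_mono) auto
  also have "\<dots> = (1 - w) * (1 / w - pi^2 * w / 3)"
    using w by (simp add: y_eq[symmetric] field_simps power2_eq_square)
  also have "\<dots> \<le> (1 - w) * (1 / w - 3 * w)"
  proof -
    have "3 * 3 \<le> pi * pi" using pi_gt3 by (intro mult_mono) auto
    then have "9 * w \<le> pi^2 * w" using w by (intro mult_right_mono) (auto simp: power2_eq_square)
    then show ?thesis using w by (intro mult_left_mono) auto
  qed
  finally have "x * (pi - y) \<le> (1 - w) * (1 / w - 3 * w)" .
  moreover have "pi - y = pi * F_C x"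
    using y_eq by (simp add: w_def algebra_simps)
  then have "pi * x * F_C x = x * (pi - y)" by (simp add: mult_ac)
  ultimately show ?thesis by linarith
qed

lemma cauchy_key_inequality_pos:
  assumes "0 < x"
  shows "- ln (F_C x) * (1 + 2 * pi * x * F_C x) \<le> 2"
proof (cases "1 + 2 * pi * x * F_C x \<le> 0")
  case True
  have L: "0 \<le> - ln (F_C x)" using ln_F_C_neg[of x] by simp
  show ?thesis using mult_nonneg_nonpos[OF L True] by linarith
next
  case False
  define w where "w = 1 - F_C x"
  have w: "0 < w" "w \<le> 1 / 2"
    using arctan_bounded[of x] assms by (auto simp: w_def F_C_def)
  have "- ln (F_C x) * (1 + 2 * pi * x * F_C x) \<le> (w + w^2 / 2 + w^3 / (3 * (1 - w))) * (1 + 2 * pi * x * F_C x)"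
    using minus_ln_one_minus_le[of w] w False by (intro mult_right_mono) (auto simp: w_def)
  also have "\<dots> \<le> (w + w^2 / 2 + w^3 / (3 * (1 - w))) * (1 + 2 * (1 - w) * (1 / w - 3 * w))"
    using cauchy_factor_le[OF assms] w by (intro mult_left_mono) (auto simp: w_def)
  also have "\<dots> \<le> 2" using ln_bound_mult_factor_bound_le_two w by blast
  finally show ?thesis .
qed

lemma cauchy_key_inequality: "- ln (F_C x) * (1 + 2 * pi * x * F_C x) \<le> 2"
proof (cases "x \<le> 0")
  case True
  then show ?thesis by (rule cauchy_key_inequality_nonpos)
next
  case False
  then show ?thesis by (intro cauchy_key_inequality_pos) simp
qed

definition cauchy_to_frechet :: "real \<Rightarrow> real" where
  "cauchy_to_frechet x = - 1 / ln (F_C x)"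

text \<open>The second derivative of \<open>cauchy_to_frechet\<close> has the sign of
  \<open>2 - (- ln F\<^sub>C(x)) (1 + 2\<pi> x F\<^sub>C(x))\<close>.\<close>
lemma convex_on_cauchy_to_frechet: "convex_on UNIV cauchy_to_frechet"
proof -
  define D where "D x = pi * (1 + x^2) * F_C x * (ln (F_C x))^2" for x
  define k' where "k' x = 1 / D x" for x
  define k'' where "k'' x = - ln (F_C x) * (ln (F_C x) * (1 + 2 * pi * x * F_C x) + 2) / (D x)^2" for x
  show ?thesis unfolding cauchy_to_frechet_def
  proof (rule f''_ge0_imp_convex[where f' = k' and f'' = k''])
    fix x :: real
    have x: "0 < F_C x" "ln (F_C x) \<noteq> 0" "0 < 1 + x^2"
      using F_C_pos[of x] ln_F_C_neg[of x] by (auto simp: add_pos_nonneg)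
    then show "((\<lambda>x. - 1 / ln (F_C x)) has_real_derivative k' x) (at x)"
      unfolding k'_def D_def
      by - ((rule derivative_eq_intros refl | (simp; fail))+,
          simp add: divide_simps, simp add: algebra_simps eval_nat_numeral)
    show "(k' has_real_derivative k'' x) (at x)"
      using x unfolding k'_def k''_def D_def
      by - ((rule derivative_eq_intros refl | (simp; fail))+,
          simp add: divide_simps, simp add: algebra_simps eval_nat_numeral)
    have "0 \<le> ln (F_C x) * (1 + 2 * pi * x * F_C x) + 2"
      using cauchy_key_inequality[of x] by simp
    then have "0 \<le> - ln (F_C x) * (ln (F_C x) * (1 + 2 * pi * x * F_C x) + 2)"
      using ln_F_C_neg[of x] by (intro mult_nonneg_nonneg) auto
    then show "0 \<le> k'' x"
      unfolding k''_def by (rule divide_nonneg_nonneg) simp_all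
  qed simp
qed

lemma F_F_cauchy_to_frechet: "F_F (cauchy_to_frechet x) = F_C x"
  using ln_F_C_neg[of x] F_C_pos[of x] by (simp add: F_F_def cauchy_to_frechet_def)

lemma S_F_subset_S_C: "S_F \<subseteq> S_C"
proof (rule skew_class_subset_of_convex_reparametrization)
  show "convex_on {x. 0 < F_C x \<and> F_C x < 1} cauchy_to_frechet"
    unfolding F_C_support by (rule convex_on_cauchy_to_frechet)
  show "F_F (cauchy_to_frechet x) = F_C x" for x
    by (rule F_F_cauchy_to_frechet)
  show "mono_on {x. 0 < F_F x \<and> F_F x < 1} F_F"
    unfolding F_F_support by (rule mono_onI) (auto simp: F_F_def divide_simps)
qed

section \<open>The Cauchy distribution and its stability\<close>

lemma nn_integral_FTC_atMost:
  fixes f F :: "real \<Rightarrow> real"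
  assumes f_borel[measurable]: "f \<in> borel_measurable borel"
    and f: "\<And>x. x \<le> b \<Longrightarrow> DERIV F x :> f x"
    and nonneg: "\<And>x. x \<le> b \<Longrightarrow> 0 \<le> f x"
    and lim: "(F \<longlongrightarrow> A) at_bot"
  shows "(\<integral>\<^sup>+x. ennreal (f x) * indicator {..b} x \<partial>lborel) = F b - A"
proof -
  have "(\<integral>\<^sup>+x. ennreal (f x) * indicator {..b} x \<partial>lborel)
      = (\<integral>\<^sup>+x. ennreal (f (- x)) * indicator {- b..} x \<partial>lborel)"
    using nn_integral_real_affine[of "\<lambda>x. ennreal (f x) * indicator {..b} x" "- 1" 0]
    by (simp add: indicator_def minus_le_iff)
  also have "\<dots> = - A - (- F (- (- b)))"
  proof (rule nn_integral_FTC_atLeast)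
    show "(\<lambda>x. f (- x)) \<in> borel_measurable borel" by measurable
    show "DERIV (\<lambda>x. - F (- x)) x :> f (- x)" if "- b \<le> x" for x
      using DERIV_minus[OF iffD1[OF DERIV_mirror f]] that by simp
    show "0 \<le> f (- x)" if "- b \<le> x" for x
      using nonneg that by simp
    show "((\<lambda>x. - F (- x)) \<longlongrightarrow> - A) at_top"
      by (intro tendsto_minus filterlim_compose[OF lim filterlim_uminus_at_bot_at_top])
  qed
  finally show ?thesis by simp
qed

lemma nn_integral_FTC_real_line:
  fixes f F :: "real \<Rightarrow> real"
  assumes f_borel[measurable]: "f \<in> borel_measurable borel"
    and f: "\<And>x. DERIV F x :> f x" and nonneg: "\<And>x. 0 \<le> f x"
    and lim_bot: "(F \<longlongrightarrow> A) at_bot" and lim_top: "(F \<longlongrightarrow> B) at_top"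
  shows "(\<integral>\<^sup>+x. ennreal (f x) \<partial>lborel) = B - A"
proof -
  have mono: "F x \<le> F y" if "x \<le> y" for x y
    using f nonneg that by (intro DERIV_nonneg_imp_nondecreasing[of x y F]) auto
  have "A \<le> F 0"
    using lim_bot by (rule tendsto_upperbound) (auto simp: eventually_at_bot_linorder intro!: exI[of _ 0] mono)
  moreover have "F 0 \<le> B"
    using lim_top by (rule tendsto_lowerbound) (auto simp: eventually_at_top_linorder intro!: exI[of _ 0] mono)
  moreover have "(\<integral>\<^sup>+x. ennreal (f x) \<partial>lborel)
      = (\<integral>\<^sup>+x. ennreal (f x) * indicator {..0} x + ennreal (f x) * indicator {0..} x \<partial>lborel)"
    by (rule nn_integral_cong_AE) (use AE_lborel_singleton[of 0] in \<open>auto split: split_indicator\<close>)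
  ultimately show ?thesis
    using nn_integral_FTC_atMost[OF f_borel f nonneg lim_bot, of 0]
      nn_integral_FTC_atLeast[OF f_borel f nonneg lim_top, of 0]
    by (simp add: nn_integral_add ennreal_plus[symmetric] del: ennreal_plus)
qed

definition cauchy_density :: "real \<Rightarrow> real \<Rightarrow> real" where
  "cauchy_density s x = s / (pi * (s^2 + x^2))"

lemma cauchy_density_pos: "0 < s \<Longrightarrow> 0 < cauchy_density s x"
  by (simp add: cauchy_density_def add_pos_nonneg)

lemma borel_measurable_cauchy_density [measurable]: "cauchy_density s \<in> borel_measurable borel"
  unfolding cauchy_density_def by measurable

lemma F_C_has_real_derivative_density: "DERIV F_C x :> cauchy_density 1 x"
  unfolding F_C_def cauchy_density_def
  by (rule derivative_eq_intros refl | (simp; fail))+ (simp add: divide_simps)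

lemma F_C_at_bot: "(F_C \<longlongrightarrow> 0) at_bot"
  unfolding F_C_def by real_asymp

lemma F_C_at_top: "(F_C \<longlongrightarrow> 1) at_top"
  unfolding F_C_def by real_asymp

definition std_cauchy :: "real measure" where
  "std_cauchy = density lborel (\<lambda>x. ennreal (cauchy_density 1 x))"

lemma sets_std_cauchy [simp, measurable_cong]: "sets std_cauchy = sets borel"
  by (simp add: std_cauchy_def)

lemma space_std_cauchy [simp]: "space std_cauchy = UNIV"
  by (simp add: std_cauchy_def)

lemma prob_space_std_cauchy: "prob_space std_cauchy"
proof
  have "(\<integral>\<^sup>+x. ennreal (cauchy_density 1 x) \<partial>lborel) = 1"
    using nn_integral_FTC_real_line[OF _ F_C_has_real_derivative_density _ F_C_at_bot F_C_at_top]
      cauchy_density_pos[of 1] by (simp add: less_imp_le)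
  then show "emeasure std_cauchy (space std_cauchy) = 1"
    by (simp add: std_cauchy_def emeasure_density)
qed

lemma emeasure_std_cauchy_atMost: "emeasure std_cauchy {..t} = F_C t"
  unfolding std_cauchy_def
  using nn_integral_FTC_atMost[OF _ F_C_has_real_derivative_density _ F_C_at_bot, of t]
    cauchy_density_pos[of 1]
  by (simp add: emeasure_density less_imp_le)

lemma measure_std_cauchy_F_C_le:
  assumes "0 \<le> u" "u \<le> 1"
  shows "measure std_cauchy {x. F_C x \<le> u} = u"
proof -
  interpret prob_space std_cauchy by (rule prob_space_std_cauchy)
  consider "u = 0" | "u = 1" | "0 < u" "u < 1" using assms by fastforce
  then show ?thesis
  proof cases
    case 1
    then have "{x. F_C x \<le> u} = {}" using F_C_pos by (auto simp: not_le[symmetric])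
    then show ?thesis using 1 by simp
  next
    case 2
    then have "{x. F_C x \<le> u} = space std_cauchy" using less_imp_le[OF F_C_less_one] by auto
    then show ?thesis using 2 prob_space by simp
  next
    case 3
    define c where "c = tan (pi * (u - 1 / 2))"
    have "arctan c = pi * (u - 1 / 2)"
      unfolding c_def using 3 by (intro arctan_tan) (auto simp: algebra_simps)
    then have F_C_c: "F_C c = u" by (simp add: F_C_def)
    have "F_C x \<le> u \<longleftrightarrow> x \<le> c" for x
    proof -
      have "F_C x \<le> F_C c \<longleftrightarrow> arctan x \<le> arctan c"
        by (simp add: F_C_def divide_le_cancel)
      then show ?thesis by (simp add: F_C_c arctan_le_iff)
    qed
    then have "{x. F_C x \<le> u} = {..c}" by auto
    then show ?thesis
      using emeasure_std_cauchy_atMost[of c] F_C_c 3 by (simp add: measure_def)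
  qed
qed

text \<open>A primitive of \<open>y \<mapsto> 1 / ((b\<^sup>2 + y\<^sup>2) (a\<^sup>2 + (y - x)\<^sup>2))\<close>, obtained by partial fractions.\<close>
definition cauchy_conv_primitive :: "real \<Rightarrow> real \<Rightarrow> real \<Rightarrow> real \<Rightarrow> real" where
  "cauchy_conv_primitive a b x y =
     (x * (ln (b^2 + y^2) - ln (a^2 + (y - x)^2)) + (x^2 + a^2 - b^2) / b * arctan (y / b)
       + (x^2 - a^2 + b^2) / a * arctan ((y - x) / a)) / ((x^2 + (a + b)^2) * (x^2 + (a - b)^2))"

lemma cauchy_conv_primitive_has_real_derivative:
  assumes a: "0 < a" and b: "0 < b" and x: "x \<noteq> 0"
  shows "DERIV (cauchy_conv_primitive a b x) y :> 1 / ((b^2 + y^2) * (a^2 + (y - x)^2))"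
proof -
  define K where "K = x^2 + a^2 - b^2"
  define L where "L = x^2 - a^2 + b^2"
  define D where "D = (x^2 + (a + b)^2) * (x^2 + (a - b)^2)"
  define p where "p = b^2 + y^2"
  define q where "q = a^2 + (y - x)^2"
  have pos: "0 < p" "0 < q" "0 < D"
    using a b x by (auto simp: p_def q_def D_def add_pos_nonneg)
  have "((2 * x * y + K) / p + (L - 2 * x * (y - x)) / q) / D
      = ((2 * x * y + K) * q + (L - 2 * x * (y - x)) * p) / (p * q * D)"
    using pos by (simp add: field_simps)
  also have "\<dots> = D / (p * q * D)"
    by (simp add: D_def K_def L_def p_def q_def algebra_simps power2_eq_square)
  also have "\<dots> = 1 / (p * q)"
    using pos by simp
  finally have partial_fractions: "((2 * x * y + K) / p + (L - 2 * x * (y - x)) / q) / D = 1 / (p * q)" .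
  have "cauchy_conv_primitive a b x =
      (\<lambda>y. (x * (ln (b^2 + y^2) - ln (a^2 + (y - x)^2)) + K / b * arctan (y / b)
        + L / a * arctan ((y - x) / a)) / D)"
    by (simp add: fun_eq_iff cauchy_conv_primitive_def K_def L_def D_def)
  moreover have "DERIV (\<lambda>y. (x * (ln (b^2 + y^2) - ln (a^2 + (y - x)^2)) + K / b * arctan (y / b)
        + L / a * arctan ((y - x) / a)) / D) y :> ((2 * x * y + K) / p + (L - 2 * x * (y - x)) / q) / D"
    using pos a b unfolding p_def q_def
    by - ((rule derivative_eq_intros refl | (simp; fail))+,
        simp add: divide_simps, simp add: algebra_simps power2_eq_square)
  ultimately show ?thesis using partial_fractions unfolding p_def q_def by simp
qed

lemma cauchy_conv_primitive_limits:
  assumes a: "0 < a" and b: "0 < b" and x: "x \<noteq> 0"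
  defines "c \<equiv> ((x^2 + a^2 - b^2) / b + (x^2 - a^2 + b^2) / a) / ((x^2 + (a + b)^2) * (x^2 + (a - b)^2))"
  shows "(cauchy_conv_primitive a b x \<longlongrightarrow> - (pi / 2) * c) at_bot"
    and "(cauchy_conv_primitive a b x \<longlongrightarrow> pi / 2 * c) at_top"
proof -
  have ln_bot: "((\<lambda>y. ln (b^2 + y^2) - ln (a^2 + (y - x)^2)) \<longlongrightarrow> 0) at_bot"
    and ln_top: "((\<lambda>y. ln (b^2 + y^2) - ln (a^2 + (y - x)^2)) \<longlongrightarrow> 0) at_top"
    and arctan1_bot: "((\<lambda>y. arctan (y / b)) \<longlongrightarrow> - (pi / 2)) at_bot"
    and arctan1_top: "((\<lambda>y. arctan (y / b)) \<longlongrightarrow> pi / 2) at_top"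
    and arctan2_bot: "((\<lambda>y. arctan ((y - x) / a)) \<longlongrightarrow> - (pi / 2)) at_bot"
    and arctan2_top: "((\<lambda>y. arctan ((y - x) / a)) \<longlongrightarrow> pi / 2) at_top"
    using a b by real_asymp+
  define K where "K = x^2 + a^2 - b^2"
  define L where "L = x^2 - a^2 + b^2"
  define D where "D = (x^2 + (a + b)^2) * (x^2 + (a - b)^2)"
  have D_ne: "D \<noteq> 0"
    using x by (auto simp: D_def add_nonneg_eq_0_iff)
  have c_eq: "c = (K / b + L / a) / D"
    by (simp add: c_def K_def L_def D_def)
  have bot_eq: "(x * 0 + K / b * - (pi / 2) + L / a * - (pi / 2)) / D = - (pi / 2) * c"
    and top_eq: "(x * 0 + K / b * (pi / 2) + L / a * (pi / 2)) / D = pi / 2 * c"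
    using a b D_ne by (simp_all add: c_eq field_simps)
  have "(cauchy_conv_primitive a b x \<longlongrightarrow> (x * 0 + K / b * - (pi / 2) + L / a * - (pi / 2)) / D) at_bot"
    using D_ne unfolding cauchy_conv_primitive_def[abs_def] K_def L_def D_def
    by (intro tendsto_intros ln_bot arctan1_bot arctan2_bot)
  then show "(cauchy_conv_primitive a b x \<longlongrightarrow> - (pi / 2) * c) at_bot"
    unfolding bot_eq .
  have "(cauchy_conv_primitive a b x \<longlongrightarrow> (x * 0 + K / b * (pi / 2) + L / a * (pi / 2)) / D) at_top"
    using D_ne unfolding cauchy_conv_primitive_def[abs_def] K_def L_def D_def
    by (intro tendsto_intros ln_top arctan1_top arctan2_top)
  then show "(cauchy_conv_primitive a b x \<longlongrightarrow> pi / 2 * c) at_top"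
    unfolding top_eq .
qed

lemma nn_integral_cauchy_convolution:
  assumes a: "0 < a" and b: "0 < b" and x: "x \<noteq> 0"
  shows "(\<integral>\<^sup>+y. ennreal (cauchy_density a (x - y) * cauchy_density b y) \<partial>lborel)
    = cauchy_density (a + b) x"
proof -
  define c where "c = ((x^2 + a^2 - b^2) / b + (x^2 - a^2 + b^2) / a)
    / ((x^2 + (a + b)^2) * (x^2 + (a - b)^2))"
  define F where "F y = a * b / pi^2 * cauchy_conv_primitive a b x y" for y
  have density_eq: "cauchy_density a (x - y) * cauchy_density b y
      = a * b / pi^2 * (1 / ((b^2 + y^2) * (a^2 + (y - x)^2)))" for y
    by (simp add: cauchy_density_def power2_commute[of x y] field_simps power2_eq_square)
  note lims = cauchy_conv_primitive_limits[OF a b x, folded c_def]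
  have "DERIV F y :> cauchy_density a (x - y) * cauchy_density b y" for y
    unfolding F_def density_eq by (intro DERIV_cmult cauchy_conv_primitive_has_real_derivative a b x)
  moreover have "(F \<longlongrightarrow> a * b / pi^2 * (- (pi / 2) * c)) at_bot"
    unfolding F_def by (rule tendsto_mult_left[OF lims(1)])
  moreover have "(F \<longlongrightarrow> a * b / pi^2 * (pi / 2 * c)) at_top"
    unfolding F_def by (rule tendsto_mult_left[OF lims(2)])
  moreover have "a * b / pi^2 * (pi / 2 * c) - a * b / pi^2 * (- (pi / 2) * c) = cauchy_density (a + b) x"
  proof -
    have pos: "0 < x^2 + (a - b)^2" "0 < x^2 + (a + b)^2"
      using x by (auto simp: add_pos_nonneg)
    have frac: "a * b * ((u / b + v / a) / d) = (a * u + b * v) / d" for u v d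
      using a b by (cases "d = 0") (simp_all add: field_simps)
    have "a * b / pi^2 * (pi / 2 * c) - a * b / pi^2 * (- (pi / 2) * c) = a * b * c / pi"
      by (simp add: field_simps power2_eq_square)
    also have "a * b * c = (a * (x^2 + a^2 - b^2) + b * (x^2 - a^2 + b^2))
        / ((x^2 + (a + b)^2) * (x^2 + (a - b)^2))"
      unfolding c_def by (rule frac)
    also have "a * (x^2 + a^2 - b^2) + b * (x^2 - a^2 + b^2) = (a + b) * (x^2 + (a - b)^2)"
      by (simp add: algebra_simps power2_eq_square)
    also have "(a + b) * (x^2 + (a - b)^2) / ((x^2 + (a + b)^2) * (x^2 + (a - b)^2))
        = (a + b) / (x^2 + (a + b)^2)"
      using pos x by simp
    finally show ?thesis by (simp add: cauchy_density_def add.commute)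
  qed
  ultimately show ?thesis
    using nn_integral_FTC_real_line[of "\<lambda>y. cauchy_density a (x - y) * cauchy_density b y" F]
      cauchy_density_pos[OF a] cauchy_density_pos[OF b] by (simp add: less_imp_le)
qed

lemma (in prob_space) distributed_cauchy_add:
  assumes indep: "indep_var borel X borel Y" and a: "0 < a" and b: "0 < b"
    and X: "distributed M lborel X (\<lambda>x. ennreal (cauchy_density a x))"
    and Y: "distributed M lborel Y (\<lambda>x. ennreal (cauchy_density b x))"
  shows "distributed M lborel (\<lambda>\<omega>. X \<omega> + Y \<omega>) (\<lambda>x. ennreal (cauchy_density (a + b) x))"
proof -
  let ?conv = "\<lambda>x. \<integral>\<^sup>+y. ennreal (cauchy_density a (x - y)) * ennreal (cauchy_density b y) \<partial>lborel"
  have conv: "distributed M lborel (\<lambda>\<omega>. X \<omega> + Y \<omega>) ?conv"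
    by (rule distributed_convolution[OF indep X Y])
  have "AE x in lborel. ?conv x = ennreal (cauchy_density (a + b) x)"
    using AE_lborel_singleton[of 0]
  proof eventually_elim
    case (elim x)
    have "?conv x = (\<integral>\<^sup>+y. ennreal (cauchy_density a (x - y) * cauchy_density b y) \<partial>lborel)"
      using cauchy_density_pos[OF a] cauchy_density_pos[OF b]
      by (intro nn_integral_cong) (simp add: ennreal_mult less_imp_le)
    also have "\<dots> = ennreal (cauchy_density (a + b) x)"
      by (rule nn_integral_cauchy_convolution[OF a b elim])
    finally show ?case .
  qed
  moreover have "?conv \<in> borel_measurable lborel"
    using conv by (simp add: distributed_def)
  ultimately show ?thesis
    using conv by (subst distributed_cong_density) auto
qed

lemma (in prob_space) distributed_cauchy_scale:
  assumes X: "distributed M lborel X (\<lambda>x. ennreal (cauchy_density 1 x))" and t: "0 < t"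
  shows "distributed M lborel (\<lambda>\<omega>. t * X \<omega>) (\<lambda>x. ennreal (cauchy_density t x))"
proof (rule distributed_affineI[where c = t and t = 0])
  have "ennreal \<bar>t\<bar> * ennreal (cauchy_density t (x * t + 0)) = ennreal (cauchy_density 1 x)" for x
  proof -
    have "t^2 + (x * t)^2 = t^2 * (1 + x^2)" by (simp add: algebra_simps power2_eq_square)
    moreover have "1 + x^2 \<noteq> 0" by (smt (verit) zero_le_power2)
    ultimately have "\<bar>t\<bar> * cauchy_density t (x * t + 0) = cauchy_density 1 x"
      using t by (simp add: cauchy_density_def power2_eq_square)
    then show ?thesis
      using t cauchy_density_pos[OF t] by (simp add: ennreal_mult[symmetric] less_imp_le)
  qed
  moreover have "(\<lambda>\<omega>. (t * X \<omega> - 0) / t) = X" using t by auto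
  ultimately show "distributed M lborel (\<lambda>\<omega>. (t * X \<omega> - 0) / t)
      (\<lambda>x. ennreal \<bar>t\<bar> * ennreal (cauchy_density t (x * t + 0)))"
    using X by simp
qed (use t in auto)

lemma (in prob_space) distributed_cauchy_sum:
  assumes "finite I" "I \<noteq> {}" "indep_vars (\<lambda>i. borel) X I"
    and "\<And>i. i \<in> I \<Longrightarrow> 0 < s i"
    and "\<And>i. i \<in> I \<Longrightarrow> distributed M lborel (X i) (\<lambda>x. ennreal (cauchy_density (s i) x))"
  shows "distributed M lborel (\<lambda>x. \<Sum>i\<in>I. X i x) (\<lambda>x. ennreal (cauchy_density (\<Sum>i\<in>I. s i) x))"
  using assms
proof (induct I rule: finite_ne_induct)
  case (singleton i)
  then show ?case by simp
next
  case (insert i I)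
  have "distributed M lborel (\<lambda>x. X i x + (\<Sum>i\<in>I. X i x))
      (\<lambda>x. ennreal (cauchy_density (s i + sum s I) x))"
  proof (rule distributed_cauchy_add)
    show "indep_var borel (X i) borel (\<lambda>\<omega>. \<Sum>i\<in>I. X i \<omega>)"
      by (rule indep_vars_sum) (use insert in auto)
    show "0 < sum s I" using insert by (intro sum_pos) auto
    show "distributed M lborel (\<lambda>x. \<Sum>i\<in>I. X i x) (\<lambda>x. ennreal (cauchy_density (sum s I) x))"
      using insert by (auto intro: indep_vars_subset)
  qed (use insert in auto)
  then show ?case using insert by simp
qed

lemma distr_PiM_std_cauchy_component:
  assumes "i \<in> I" and N: "sets N = sets borel"
  shows "distr (PiM I (\<lambda>_. std_cauchy)) N (\<lambda>c. c i) = std_cauchy"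
proof -
  have "distr (PiM I (\<lambda>_. std_cauchy)) N (\<lambda>c. c i) = distr (PiM I (\<lambda>_. std_cauchy)) std_cauchy (\<lambda>c. c i)"
    by (rule distr_cong) (auto simp: N)
  also have "\<dots> = std_cauchy"
    by (rule distr_PiM_component) (use assms prob_space_std_cauchy in auto)
  finally show ?thesis .
qed

lemma indep_vars_PiM_std_cauchy_components:
  assumes "finite I" "I \<noteq> {}"
  shows "prob_space.indep_vars (PiM I (\<lambda>_. std_cauchy)) (\<lambda>_. borel) (\<lambda>i c. c i) I"
proof -
  interpret P: prob_space "PiM I (\<lambda>_. std_cauchy)"
    by (rule prob_space_PiM) (use prob_space_std_cauchy in auto)
  show ?thesis
  proof (subst P.indep_vars_iff_distr_eq_PiM'[OF assms(2)])
    show "(\<lambda>c. c i) \<in> borel_measurable (PiM I (\<lambda>_. std_cauchy))" if "i \<in> I" for i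
      using measurable_component_singleton[OF that, of "\<lambda>_. std_cauchy"]
        measurable_cong_sets[of "PiM I (\<lambda>_. std_cauchy)" "PiM I (\<lambda>_. std_cauchy)" std_cauchy borel]
      by simp
    have "distr (PiM I (\<lambda>_. std_cauchy)) (PiM I (\<lambda>_. borel)) (\<lambda>c. \<lambda>i\<in>I. c i)
        = distr (PiM I (\<lambda>_. std_cauchy)) (PiM I (\<lambda>_. std_cauchy)) (\<lambda>c. c)"
      by (rule distr_cong) (auto simp: space_PiM intro!: sets_PiM_cong)
    also have "\<dots> = PiM I (\<lambda>_. std_cauchy)" by (rule distr_id2) simp
    also have "\<dots> = PiM I (\<lambda>i. distr (PiM I (\<lambda>_. std_cauchy)) borel (\<lambda>c. c i))"
      by (rule PiM_cong) (simp_all add: distr_PiM_std_cauchy_component)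
    finally show "distr (PiM I (\<lambda>_. std_cauchy)) (PiM I (\<lambda>_. borel)) (\<lambda>c. \<lambda>i\<in>I. c i)
        = PiM I (\<lambda>i. distr (PiM I (\<lambda>_. std_cauchy)) borel (\<lambda>c. c i))" .
  qed
qed

text \<open>Indices with zero weight are dropped first: \<open>cauchy_density 0\<close> is not a density.\<close>
lemma distributed_PiM_std_cauchy_convex_combination:
  assumes I: "finite I" and \<theta>: "\<And>i. i \<in> I \<Longrightarrow> 0 \<le> \<theta> i" and sum_\<theta>: "sum \<theta> I = 1"
  shows "distributed (PiM I (\<lambda>_. std_cauchy)) lborel (\<lambda>c. \<Sum>i\<in>I. \<theta> i * c i)
    (\<lambda>x. ennreal (cauchy_density 1 x))"
proof -
  interpret P: prob_space "PiM I (\<lambda>_. std_cauchy)"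
    by (rule prob_space_PiM) (use prob_space_std_cauchy in auto)
  define J where "J = {i \<in> I. 0 < \<theta> i}"
  have J: "J \<subseteq> I" "finite J" using I by (auto simp: J_def)
  have zero: "\<theta> i = 0" if "i \<in> I - J" for i using \<theta>[of i] that by (auto simp: J_def)
  have sum_J: "sum \<theta> J = 1" using sum_\<theta> sum.mono_neutral_left[OF I J(1), of \<theta>] zero by simp
  then have "J \<noteq> {}" by auto
  have sum_eq: "(\<lambda>c. \<Sum>i\<in>I. \<theta> i * c i) = (\<lambda>c. \<Sum>i\<in>J. \<theta> i * c i)"
    by (intro ext sum.mono_neutral_right[OF I J(1)]) (simp add: zero)
  have "P.indep_vars (\<lambda>_. borel) (\<lambda>i c. \<theta> i * c i) J"
    using P.indep_vars_compose2[OF P.indep_vars_subset[OF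
        indep_vars_PiM_std_cauchy_components[OF I] J(1)], of "\<lambda>i x. \<theta> i * x" "\<lambda>_. borel"]
      \<open>J \<noteq> {}\<close> J(1) by auto
  then have "distributed (PiM I (\<lambda>_. std_cauchy)) lborel (\<lambda>c. \<Sum>i\<in>J. \<theta> i * c i)
      (\<lambda>x. ennreal (cauchy_density (\<Sum>i\<in>J. \<theta> i) x))"
  proof (rule P.distributed_cauchy_sum[OF J(2) \<open>J \<noteq> {}\<close>])
    fix i assume "i \<in> J"
    then show "0 < \<theta> i" by (simp add: J_def)
    have "distr (PiM I (\<lambda>_. std_cauchy)) lborel (\<lambda>c. c i) = std_cauchy"
      using \<open>i \<in> J\<close> J(1) by (intro distr_PiM_std_cauchy_component) auto
    then have "distributed (PiM I (\<lambda>_. std_cauchy)) lborel (\<lambda>c. c i) (\<lambda>x. ennreal (cauchy_density 1 x))"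
      using measurable_component_singleton[of i I "\<lambda>_. std_cauchy"] \<open>i \<in> J\<close> J(1)
      by (auto simp: distributed_def std_cauchy_def)
    then show "distributed (PiM I (\<lambda>_. std_cauchy)) lborel (\<lambda>c. \<theta> i * c i)
        (\<lambda>x. ennreal (cauchy_density (\<theta> i) x))"
      by (rule P.distributed_cauchy_scale) (use \<open>0 < \<theta> i\<close> in simp)
  qed
  then show ?thesis unfolding sum_eq sum_J .
qed

section \<open>The stochastic order\<close>

lemma mono_quantile_F_C:
  assumes G: "is_dist_fun G"
  shows "mono (\<lambda>x. quantile G (F_C x))"
proof -
  have "mono_on UNIV F_C"
    by (rule mono_onI) (simp add: F_C_def divide_right_mono arctan_le_iff)
  then have "mono_on UNIV (\<lambda>x. quantile G (F_C x))"
    using F_C_pos F_C_less_one by (intro mono_on_quantile_comp[OF G]) auto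
  then show ?thesis
    by (auto intro!: monoI dest: monotone_onD)
qed

lemma measure_std_cauchy_quantile_transform:
  assumes G: "is_dist_fun G"
  shows "measure std_cauchy {x. quantile G (F_C x) \<le> t} = G t"
proof -
  have "{x. quantile G (F_C x) \<le> t} = {x. F_C x \<le> G t}"
    using quantile_le_iff[OF G F_C_pos F_C_less_one] by auto
  then show ?thesis
    using measure_std_cauchy_F_C_le is_dist_fun_nonneg[OF G] is_dist_fun_le_one[OF G] by simp
qed

lemma (in prob_space) distr_eq_quantile_transform:
  assumes G: "is_dist_fun G" and X: "X \<in> borel_measurable M"
    and cdf_X: "\<And>t. measure M {\<omega> \<in> space M. X \<omega> \<le> t} = G t"
  shows "distr M borel X = distr std_cauchy borel (\<lambda>x. quantile G (F_C x))"
proof -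
  interpret C: prob_space std_cauchy by (rule prob_space_std_cauchy)
  have \<phi>: "(\<lambda>x. quantile G (F_C x)) \<in> borel_measurable std_cauchy"
    using borel_measurable_mono[OF mono_quantile_F_C[OF G]]
      measurable_cong_sets[of std_cauchy borel borel borel] by simp
  show ?thesis
  proof (rule cdf_unique)
    show "real_distribution (distr M borel X)" using X by simp
    show "real_distribution (distr std_cauchy borel (\<lambda>x. quantile G (F_C x)))"
      using C.real_distribution_distr[OF \<phi>] .
    show "cdf (distr M borel X) = cdf (distr std_cauchy borel (\<lambda>x. quantile G (F_C x)))"
    proof
      fix t
      have "cdf (distr M borel X) t = measure M {\<omega> \<in> space M. X \<omega> \<le> t}"
        unfolding cdf_def using X by (subst measure_distr) (auto intro!: arg_cong[where f = prob])
      moreover have "cdf (distr std_cauchy borel (\<lambda>x. quantile G (F_C x))) t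
          = measure std_cauchy {x. quantile G (F_C x) \<le> t}"
        unfolding cdf_def using \<phi> by (subst measure_distr) (auto intro!: arg_cong[where f = C.prob])
      ultimately show "cdf (distr M borel X) t = cdf (distr std_cauchy borel (\<lambda>x. quantile G (F_C x))) t"
        using cdf_X measure_std_cauchy_quantile_transform[OF G] by simp
    qed
  qed
qed

lemma (in prob_space) measure_weighted_sum_le_eq_PiM:
  fixes X :: "'i \<Rightarrow> 'a \<Rightarrow> real"
  assumes I: "finite I" "I \<noteq> {}" and indep: "indep_vars (\<lambda>_. borel) X I"
    and X: "\<And>i. i \<in> I \<Longrightarrow> X i \<in> borel_measurable M"
    and law: "\<And>i. i \<in> I \<Longrightarrow> distr M borel (X i) = \<mu>"
  shows "measure M {\<omega> \<in> space M. (\<Sum>i\<in>I. \<theta> i * X i \<omega>) \<le> t}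
    = measure (PiM I (\<lambda>_. \<mu>)) {y \<in> space (PiM I (\<lambda>_. \<mu>)). (\<Sum>i\<in>I. \<theta> i * y i) \<le> t}"
proof -
  obtain i where "i \<in> I" using I by blast
  then have sets_\<mu>: "sets \<mu> = sets borel" using law[of i] by auto
  have sets_PiM: "sets (PiM I (\<lambda>_. \<mu>)) = sets (PiM I (\<lambda>_. borel))"
    by (rule sets_PiM_cong) (simp_all add: sets_\<mu>)
  then have space_PiM: "space (PiM I (\<lambda>_. \<mu>)) = space (PiM I (\<lambda>_. borel))"
    by (rule sets_eq_imp_space_eq)
  define V where "V \<omega> = (\<lambda>i\<in>I. X i \<omega>)" for \<omega>
  define A where "A = {y \<in> space (PiM I (\<lambda>_. borel)). (\<Sum>i\<in>I. \<theta> i * y i) \<le> t}"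
  have V: "V \<in> measurable M (PiM I (\<lambda>_. borel))"
    unfolding V_def by (rule measurable_restrict) (rule X)
  have "distr M (PiM I (\<lambda>_. borel)) V = PiM I (\<lambda>i. distr M borel (X i))"
    unfolding V_def using indep_vars_iff_distr_eq_PiM'[OF I(2), where M' = "\<lambda>_. borel" and X = X] X indep by simp
  also have "\<dots> = PiM I (\<lambda>_. \<mu>)" by (rule PiM_cong) (simp_all add: law)
  finally have law_V: "distr M (PiM I (\<lambda>_. borel)) V = PiM I (\<lambda>_. \<mu>)" .
  have A: "A \<in> sets (PiM I (\<lambda>_. borel))" unfolding A_def by measurable
  have "{\<omega> \<in> space M. (\<Sum>i\<in>I. \<theta> i * X i \<omega>) \<le> t} = V -` A \<inter> space M"
    using measurable_space[OF V] by (auto simp: A_def V_def)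
  then have "measure M {\<omega> \<in> space M. (\<Sum>i\<in>I. \<theta> i * X i \<omega>) \<le> t} = measure (PiM I (\<lambda>_. \<mu>)) A"
    using measure_distr[OF V A] law_V by simp
  then show ?thesis by (simp add: A_def space_PiM)
qed

lemma measure_PiM_std_cauchy_weighted_sum_le:
  assumes G: "is_dist_fun G" and cvx: "convex_on UNIV (\<lambda>x. quantile G (F_C x))"
    and I: "finite I" "I \<noteq> {}" and \<theta>: "\<And>i. i \<in> I \<Longrightarrow> 0 \<le> \<theta> i" and sum_\<theta>: "sum \<theta> I = 1"
  defines "\<Omega> \<equiv> PiM I (\<lambda>_. std_cauchy)"
  shows "measure \<Omega> {c \<in> space \<Omega>. (\<Sum>i\<in>I. \<theta> i * quantile G (F_C (c i))) \<le> t} \<le> G t"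
proof -
  define \<phi> where "\<phi> x = quantile G (F_C x)" for x
  interpret \<Omega>: prob_space \<Omega>
    unfolding \<Omega>_def by (rule prob_space_PiM) (rule prob_space_std_cauchy)
  have [measurable]: "\<phi> \<in> borel_measurable borel"
    unfolding \<phi>_def[abs_def] by (rule borel_measurable_mono[OF mono_quantile_F_C[OF G]])
  have "measure \<Omega> {c \<in> space \<Omega>. (\<Sum>i\<in>I. \<theta> i * \<phi> (c i)) \<le> t}
      \<le> measure \<Omega> {c \<in> space \<Omega>. \<phi> (\<Sum>i\<in>I. \<theta> i * c i) \<le> t}"
  proof (rule \<Omega>.finite_measure_mono)
    have "convex_on UNIV \<phi>" using cvx by (simp add: \<phi>_def[abs_def])
    then have "\<phi> (\<Sum>i\<in>I. \<theta> i * c i) \<le> (\<Sum>i\<in>I. \<theta> i * \<phi> (c i))" for c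
      using convex_on_sum[OF I _ sum_\<theta>, of UNIV \<phi> "\<lambda>i. c i"] \<theta> by simp
    then show "{c \<in> space \<Omega>. (\<Sum>i\<in>I. \<theta> i * \<phi> (c i)) \<le> t} \<subseteq> {c \<in> space \<Omega>. \<phi> (\<Sum>i\<in>I. \<theta> i * c i) \<le> t}"
      by (auto intro: order_trans)
    show "{c \<in> space \<Omega>. \<phi> (\<Sum>i\<in>I. \<theta> i * c i) \<le> t} \<in> \<Omega>.events"
      unfolding \<Omega>_def by measurable
  qed
  also have "\<dots> = measure std_cauchy {x. \<phi> x \<le> t}"
  proof -
    have S: "distributed \<Omega> lborel (\<lambda>c. \<Sum>i\<in>I. \<theta> i * c i) (\<lambda>x. ennreal (cauchy_density 1 x))"
      unfolding \<Omega>_def by (rule distributed_PiM_std_cauchy_convex_combination[OF I(1) \<theta> sum_\<theta>])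
    then have "distr \<Omega> lborel (\<lambda>c. \<Sum>i\<in>I. \<theta> i * c i) = std_cauchy"
      by (simp add: distributed_def std_cauchy_def)
    moreover have "{x. \<phi> x \<le> t} \<in> sets lborel" by measurable
    ultimately show ?thesis
      using measure_distr[of "\<lambda>c. \<Sum>i\<in>I. \<theta> i * c i" \<Omega> lborel "{x. \<phi> x \<le> t}"] S
      by (auto simp: distributed_def vimage_def Int_def conj_commute)
  qed
  also have "\<dots> = G t"
    using measure_std_cauchy_quantile_transform[OF G] by (simp add: \<phi>_def)
  finally show ?thesis by (simp add: \<phi>_def)
qed

lemma (in prob_space) measure_weighted_sum_le_le:
  fixes X :: "'i \<Rightarrow> 'a \<Rightarrow> real"
  assumes G: "is_dist_fun G" and cvx: "convex_on UNIV (\<lambda>x. quantile G (F_C x))"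
    and I: "finite I" "i0 \<in> I" and \<theta>: "\<And>i. i \<in> I \<Longrightarrow> 0 \<le> \<theta> i" and sum_\<theta>: "sum \<theta> I = 1"
    and X: "\<And>i. i \<in> I \<Longrightarrow> X i \<in> borel_measurable M"
    and indep: "indep_vars (\<lambda>_. borel) X I"
    and cdf_X: "\<And>i t. i \<in> I \<Longrightarrow> measure M {\<omega> \<in> space M. X i \<omega> \<le> t} = G t"
  shows "measure M {\<omega> \<in> space M. (\<Sum>i\<in>I. \<theta> i * X i \<omega>) \<le> t} \<le> measure M {\<omega> \<in> space M. X i0 \<omega> \<le> t}"
proof -
  define \<phi> where "\<phi> x = quantile G (F_C x)" for x
  define \<Omega> where "\<Omega> = PiM I (\<lambda>_. std_cauchy)"
  have I_ne: "I \<noteq> {}" using I by blast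
  interpret \<Omega>: prob_space \<Omega>
    unfolding \<Omega>_def by (rule prob_space_PiM) (rule prob_space_std_cauchy)
  have \<phi>[measurable]: "\<phi> \<in> borel_measurable borel"
    unfolding \<phi>_def[abs_def] by (rule borel_measurable_mono[OF mono_quantile_F_C[OF G]])
  have component: "(\<lambda>c. c i) \<in> measurable \<Omega> borel" if "i \<in> I" for i
    using measurable_component_singleton[OF that, of "\<lambda>_. std_cauchy"]
      measurable_cong_sets[of \<Omega> \<Omega> std_cauchy borel] by (simp add: \<Omega>_def)
  have law_\<phi>C: "distr \<Omega> borel (\<lambda>c. \<phi> (c i)) = distr std_cauchy borel \<phi>" if "i \<in> I" for i
  proof -
    have "distr \<Omega> borel (\<lambda>c. \<phi> (c i)) = distr (distr \<Omega> borel (\<lambda>c. c i)) borel \<phi>"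
      using distr_distr[OF _ component[OF that], of \<phi> borel] by (simp add: comp_def)
    also have "distr \<Omega> borel (\<lambda>c. c i) = std_cauchy"
      unfolding \<Omega>_def using that by (intro distr_PiM_std_cauchy_component) auto
    finally show ?thesis by (rule trans) (rule distr_cong; simp)
  qed
  have "measure M {\<omega> \<in> space M. (\<Sum>i\<in>I. \<theta> i * X i \<omega>) \<le> t}
      = measure (PiM I (\<lambda>_. distr std_cauchy borel \<phi>))
          {y \<in> space (PiM I (\<lambda>_. distr std_cauchy borel \<phi>)). (\<Sum>i\<in>I. \<theta> i * y i) \<le> t}"
    using distr_eq_quantile_transform[OF G X cdf_X]
    by (intro measure_weighted_sum_le_eq_PiM[OF I(1) I_ne indep X]) (simp_all add: \<phi>_def[abs_def])
  also have "\<dots> = measure \<Omega> {c \<in> space \<Omega>. (\<Sum>i\<in>I. \<theta> i * \<phi> (c i)) \<le> t}"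
  proof (rule \<Omega>.measure_weighted_sum_le_eq_PiM[OF I(1) I_ne, symmetric])
    show "\<Omega>.indep_vars (\<lambda>_. borel) (\<lambda>i c. \<phi> (c i)) I"
      using \<Omega>.indep_vars_compose2[OF indep_vars_PiM_std_cauchy_components[OF I(1) I_ne, folded \<Omega>_def],
          of "\<lambda>_. \<phi>" "\<lambda>_. borel"]
      by simp
  qed (use component law_\<phi>C in auto)
  also have "\<dots> \<le> G t"
    unfolding \<Omega>_def \<phi>_def by (rule measure_PiM_std_cauchy_weighted_sum_le[OF G cvx I(1) I_ne \<theta> sum_\<theta>])
  also have "\<dots> = measure M {\<omega> \<in> space M. X i0 \<omega> \<le> t}"
    using cdf_X[OF I(2)] by simp
  finally show ?thesis .
qed

lemma S_C_subset_Dminus: "S_C \<subseteq> {G. is_dist_fun G \<and> Dminus TYPE('a) G}"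
proof
  fix G assume "G \<in> S_C"
  then have G: "is_dist_fun G" and cvx: "convex_on UNIV (\<lambda>x. quantile G (F_C x))"
    by (auto simp: skew_class_def skew_le_def F_C_support)
  have "Dminus TYPE('a) G"
    unfolding Dminus_def st_le_def
  proof (intro allI impI)
    fix M :: "'a measure" and X :: "nat \<Rightarrow> 'a \<Rightarrow> real" and n :: nat and \<theta> :: "nat \<Rightarrow> real" and t :: real
    assume "prob_space M" "1 \<le> n" "\<forall>i\<in>{1..n}. 0 \<le> \<theta> i" "(\<Sum>i=1..n. \<theta> i) = 1"
      "\<forall>i\<in>{1..n}. X i \<in> borel_measurable M" "prob_space.indep_vars M (\<lambda>_. borel) X {1..n}"
      "\<forall>i\<in>{1..n}. \<forall>t. measure M {\<omega> \<in> space M. X i \<omega> \<le> t} = G t"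
    then show "measure M {\<omega> \<in> space M. X 1 \<omega> \<le> t} \<ge> measure M {\<omega> \<in> space M. (\<Sum>i=1..n. \<theta> i * X i \<omega>) \<le> t}"
      by (intro prob_space.measure_weighted_sum_le_le[OF _ G cvx]) auto
  qed
  then show "G \<in> {G. is_dist_fun G \<and> Dminus TYPE('a) G}" using G by simp
qed

theorem theorem7:
  shows "S_P \<subseteq> S_F \<and> S_F \<subseteq> S_C \<and> S_C \<subseteq> {G. is_dist_fun G \<and> Dminus TYPE('a) G}"
  using S_P_subset_S_F S_F_subset_S_C S_C_subset_Dminus by blast

end
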